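(* Consider the one-ported gather/scatter tree model described in the context, with arbitrary block sizes $m_0,\dots,m_{p-1}\ge 0$ and arbitrary (possibly non-homogeneous) parameters $\alpha_{ij},\beta_{ij},\gamma_i\ge 0$. Let $P\subseteq\{0,\dots,p-1\}$ with $|P|\ge 2$ and let $r\in P$. Then the minimum of $\mathrm{cost}(T)$ over all communication trees $T$ on $P$ with root $r$ is equal to the minimum, over all partitions $P=R\cup\bar R$ into disjoint sets with $r\in R$, all $r'\in\bar R$, all communication trees $T_1$ on $R$ with root $r$ and all communication trees $T_2$ on $\bar R$ with root $r'$, of the quantity \[ \Phi=\begin{cases}\max(\gamma_r m_r,\ \mathrm{cost}(T_2))+\alpha_{r'r}+\beta_{r'r}\,\mathrm{Size}(\bar R) & \text{if } R=\{r\},\\[2pt] \max(\mathrm{cost}(T_1),\ \mathrm{cost}(T_2))+\alpha_{r'r}+\beta_{r'r}\,\mathrm{Size}(\bar R) & \text{if } |R|\ge 2.\end{cases} \]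
   Context: There are $p$ processors $0,\dots,p-1$; processor $i$ has a data block of size $m_i\ge 0$. For a set $R$ of processors, $\mathrm{Size}(R)=\sum_{i\in R}m_i$. For every ordered pair of distinct processors $i,j$ there are a start-up latency $\alpha_{ij}\ge 0$ and a time per unit $\beta_{ij}\ge 0$ (transmitting $s$ units from $i$ to $j$ costs $\alpha_{ij}+\beta_{ij}s$), and each processor $i$ has a local copy cost $\gamma_i\ge0$ per unit. Communication trees (used for gather and scatter): a communication tree on a nonempty finite set $R$ of processors with root $r\in R$ is either the trivial tree (only when $R=\{r\}$), or consists of the root $r$ together with a finite sequence of entries $(E_0,\dots,E_j)$ in which exactly one entry is a special "local copy" marker and every other entry $E_t$ is a communication tree on a set $R_t$ with root $r_t$, there is at least one such tree entry, and the sets $\{r\}$ and the $R_t$ form a partition of $R$ (the roots $r_t$ are the children of $r$). The completion time (one-ported model) is defined recursively: the trivial tree has cost $0$; otherwise put $c_{-1}=0$ and for $t=0,\dots,j$ let $c_t=c_{t-1}+\gamma_r m_r$ if $E_t$ is the local copy marker, and $c_t=\max(c_{t-1},\mathrm{cost}(E_t))+\alpha_{r_t r}+\beta_{r_t r}\,\mathrm{Size}(R_t)$ if $E_t$ is a tree on $R_t$ with root $r_t$; then $\mathrm{cost}(T)=c_j$. *)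

theory Defs
  imports Complex_Main
begin

datatype ctree = Triv nat | Node nat "centry list"
and centry = LocalCopy | Sub ctree

fun troot :: "ctree \<Rightarrow> nat" where
  "troot (Triv r) = r"
| "troot (Node r es) = r"

fun tset :: "ctree \<Rightarrow> nat set" and esets :: "centry \<Rightarrow> nat set" where
  "tset (Triv r) = {r}"
| "tset (Node r es) = insert r (\<Union>e\<in>set es. esets e)"
| "esets LocalCopy = {}"
| "esets (Sub t) = tset t"

fun wf_tree :: "ctree \<Rightarrow> bool" and wf_entry :: "centry \<Rightarrow> bool" where
  "wf_tree (Triv r) = True"
| "wf_tree (Node r es) =
     (length (filter (\<lambda>e. e = LocalCopy) es) = 1
      \<and> (\<exists>t. Sub t \<in> set es)
      \<and> (\<forall>e\<in>set es. wf_entry e)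
      \<and> (\<forall>t. Sub t \<in> set es \<longrightarrow> r \<notin> tset t)
      \<and> (\<forall>i<length es. \<forall>j<length es. i \<noteq> j \<longrightarrow> esets (es ! i) \<inter> esets (es ! j) = {}))"
| "wf_entry LocalCopy = True"
| "wf_entry (Sub t) = wf_tree t"

definition is_ctree :: "nat set \<Rightarrow> nat \<Rightarrow> ctree \<Rightarrow> bool" where
  "is_ctree R r T \<longleftrightarrow> wf_tree T \<and> tset T = R \<and> troot T = r"

definition Size :: "(nat \<Rightarrow> real) \<Rightarrow> nat set \<Rightarrow> real" where
  "Size m R = (\<Sum>i\<in>R. m i)"

text \<open>Completion time in the one-ported model. costs processes the entry list
  from left to right, starting from the accumulated value c (c_{-1} = 0).\<close>
fun cost :: "(nat \<Rightarrow> real) \<Rightarrow> (nat \<Rightarrow> nat \<Rightarrow> real) \<Rightarrow> (nat \<Rightarrow> nat \<Rightarrow> real) \<Rightarrow> (nat \<Rightarrow> real)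
               \<Rightarrow> ctree \<Rightarrow> real"
and costs :: "(nat \<Rightarrow> real) \<Rightarrow> (nat \<Rightarrow> nat \<Rightarrow> real) \<Rightarrow> (nat \<Rightarrow> nat \<Rightarrow> real) \<Rightarrow> (nat \<Rightarrow> real)
               \<Rightarrow> nat \<Rightarrow> real \<Rightarrow> centry list \<Rightarrow> real" where
  "cost m \<alpha> \<beta> \<gamma> (Triv r) = 0"
| "cost m \<alpha> \<beta> \<gamma> (Node r es) = costs m \<alpha> \<beta> \<gamma> r 0 es"
| "costs m \<alpha> \<beta> \<gamma> r c [] = c"
| "costs m \<alpha> \<beta> \<gamma> r c (LocalCopy # es) = costs m \<alpha> \<beta> \<gamma> r (c + \<gamma> r * m r) es"
| "costs m \<alpha> \<beta> \<gamma> r c (Sub t # es) =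
     costs m \<alpha> \<beta> \<gamma> r (max c (cost m \<alpha> \<beta> \<gamma> t) + \<alpha> (troot t) r + \<beta> (troot t) r * Size m (tset t)) es"

end

theory Submission
  imports Defs
begin

text \<open>Appending a tree \<open>T\<^sub>2\<close> on \<open>R\<^bsub>b\<^esub>\<close> as last entry of a tree \<open>T\<^sub>1\<close> on \<open>R\<close> gives a tree
  on \<open>P\<close> of cost exactly \<open>\<Phi>\<close>, so every value of \<open>\<Phi>\<close> is a tree cost. Conversely, in a tree on
  \<open>P\<close> at most the local copy follows the last subtree entry; moving that subtree behind the
  local copy does not increase the cost because \<open>\<gamma>\<^sub>r m\<^sub>r \<ge> 0\<close>, and the remaining entries form a
  tree \<open>T\<^sub>1\<close> on the rest of \<open>P\<close>. Hence both minima coincide.\<close>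

lemma sorted_wrt_symmetric_iff_nth:
  assumes "symp R"
  shows "sorted_wrt R xs \<longleftrightarrow>
    (\<forall>i<length xs. \<forall>j<length xs. i \<noteq> j \<longrightarrow> R (xs ! i) (xs ! j))"
  unfolding sorted_wrt_iff_nth_less
  using assms by (auto simp: symp_def) (metis linorder_neqE_nat)

text \<open>Stating disjointness of the entries with \<^const>\<open>sorted_wrt\<close> instead of indices
  makes it compatible with list append.\<close>

abbreviation disjoint_entries :: "centry list \<Rightarrow> bool" where
  "disjoint_entries \<equiv> sorted_wrt (\<lambda>x y. esets x \<inter> esets y = {})"

lemma wf_tree_Node_iff [simp]:
  "wf_tree (Node r es) \<longleftrightarrow>
     length (filter (\<lambda>e. e = LocalCopy) es) = 1
     \<and> (\<exists>t. Sub t \<in> set es)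
     \<and> (\<forall>e\<in>set es. wf_entry e)
     \<and> (\<forall>t. Sub t \<in> set es \<longrightarrow> r \<notin> tset t)
     \<and> disjoint_entries es"
  by (simp add: sorted_wrt_symmetric_iff_nth symp_def Int_commute)

declare wf_tree.simps(2) [simp del]

lemma troot_in_tset: "troot t \<in> tset t"
  by (cases t) auto

lemma is_ctree_singleton_iff:
  assumes "is_ctree R r T"
  shows "R = {r} \<longleftrightarrow> T = Triv r"
proof (cases T)
  case (Node x es)
  then obtain t where "Sub t \<in> set es" "r \<notin> tset t"
    using assms by (auto simp: is_ctree_def)
  then have "troot t \<in> R - {r}"
    using assms Node troot_in_tset[of t] by (auto simp: is_ctree_def)
  then show ?thesis using Node by auto
qed (use assms in \<open>auto simp: is_ctree_def\<close>)

lemma distinct_if_disjoint_entries: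
  assumes "disjoint_entries es" and "length (filter (\<lambda>e. e = LocalCopy) es) \<le> 1"
  shows "distinct es"
  using assms
proof (induction es)
  case (Cons e es)
  have "e \<notin> set es"
  proof (cases e)
    case LocalCopy
    then show ?thesis using Cons.prems by (auto simp: filter_empty_conv)
  next
    case (Sub t)
    then show ?thesis using Cons.prems troot_in_tset[of t] by auto
  qed
  moreover have "distinct es" using Cons by (auto split: if_splits)
  ultimately show ?case by simp
qed simp

lemma finite_wf_trees:
  assumes "finite S"
  shows "finite {T. wf_tree T \<and> tset T = S}"
  using assms
proof (induction S rule: finite_psubset_induct)
  case (psubset S)
  \<comment> \<open>entry lists are distinct lists over the finite set \<open>E\<close> of possible entries\<close>
  define E where "E = insert LocalCopy (\<Union>B\<in>{B. B \<subset> S}. Sub ` {T. wf_tree T \<and> tset T = B})"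
  have "finite E"
    unfolding E_def using psubset
    by (intro finite.insertI finite_UN_I) (auto intro: finite_subset[of _ "Pow S"])
  have "{T. wf_tree T \<and> tset T = S} \<subseteq>
      Triv ` S \<union> case_prod Node ` (S \<times> {es. set es \<subseteq> E \<and> distinct es})"
  proof
    fix T
    assume T: "T \<in> {T. wf_tree T \<and> tset T = S}"
    show "T \<in> Triv ` S \<union> case_prod Node ` (S \<times> {es. set es \<subseteq> E \<and> distinct es})"
    proof (cases T)
      case (Node r es)
      have "distinct es" using T Node distinct_if_disjoint_entries by auto
      moreover have "set es \<subseteq> E"
      proof
        fix e
        assume e: "e \<in> set es"
        show "e \<in> E"
        proof (cases e)
          case (Sub t)
          then have "wf_tree t" "tset t \<subset> S" using T Node e by auto
          then show ?thesis unfolding E_def using Sub by blast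
        qed (simp add: E_def)
      qed
      ultimately show ?thesis using T Node by auto
    qed (use T in auto)
  qed
  moreover have "finite (Triv ` S \<union> case_prod Node ` (S \<times> {es. set es \<subseteq> E \<and> distinct es}))"
    using psubset \<open>finite E\<close> finite_subset_distinct by auto
  ultimately show ?case by (rule finite_subset)
qed

lemma finite_ctrees: "finite R \<Longrightarrow> finite {T. is_ctree R r T}"
  unfolding is_ctree_def by (rule finite_subset[OF _ finite_wf_trees]) auto

lemma disjoint_entries_star:
  "distinct xs \<Longrightarrow> disjoint_entries (LocalCopy # map (Sub \<circ> Triv) xs)"
  by (induction xs) (auto simp: sorted_wrt_map)

lemma ctree_exists:
  assumes "finite R" and "r \<in> R"
  obtains T where "is_ctree R r T"
proof (cases "R = {r}")
  case True
  then show ?thesis using that[of "Triv r"] by (simp add: is_ctree_def)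
next
  case False
  define xs where "xs = sorted_list_of_set (R - {r})"
  let ?es = "LocalCopy # map (Sub \<circ> Triv) xs"
  have xs: "distinct xs" "set xs = R - {r}" using assms(1) by (simp_all add: xs_def)
  then obtain i where "i \<in> set xs" using False assms(2) by blast
  then have "Sub (Triv i) \<in> set ?es" by simp
  moreover have "disjoint_entries ?es" using xs(1) by (rule disjoint_entries_star)
  moreover have "length (filter (\<lambda>e. e = LocalCopy) ?es) = 1"
    by (simp add: filter_empty_conv)
  moreover have "\<forall>t. Sub t \<in> set ?es \<longrightarrow> r \<notin> tset t"
  proof (intro allI impI)
    fix t
    assume "Sub t \<in> set ?es"
    then obtain i where "i \<in> set xs" and "t = Triv i" by auto
    then show "r \<notin> tset t" using xs(2) by simp
  qed
  moreover have "\<forall>e\<in>set ?es. wf_entry e" by auto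
  moreover have "tset (Node r ?es) = R" using xs(2) assms(2) by auto
  ultimately have "is_ctree R r (Node r ?es)"
    unfolding is_ctree_def wf_tree_Node_iff troot.simps by blast
  then show ?thesis by (rule that)
qed

lemma costs_append:
  "costs m \<alpha> \<beta> \<gamma> r c (xs @ ys) = costs m \<alpha> \<beta> \<gamma> r (costs m \<alpha> \<beta> \<gamma> r c xs) ys"
proof (induction xs arbitrary: c)
  case (Cons e xs)
  then show ?case by (cases e) auto
qed simp

lemma costs_LocalCopies:
  fixes m \<gamma> :: "nat \<Rightarrow> real"
  assumes "\<forall>e\<in>set es. e = LocalCopy"
  shows "costs m \<alpha> \<beta> \<gamma> r c es = c + length es * (\<gamma> r * m r)"
  using assms by (induction es arbitrary: c) (auto simp: algebra_simps)

lemma costs_move_Sub_to_end_le: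
  assumes "\<forall>e\<in>set post. e = LocalCopy" and "\<gamma> r * m r \<ge> 0"
  shows "costs m \<alpha> \<beta> \<gamma> r c (pre @ post @ [Sub t]) \<le> costs m \<alpha> \<beta> \<gamma> r c (pre @ Sub t # post)"
proof -
  let ?copies = "length post * (\<gamma> r * m r)"
  have "?copies \<ge> 0" using assms(2) by simp
  then show ?thesis
    using assms(1) by (simp add: costs_append costs_LocalCopies max_def)
qed

text \<open>The trivial tree counts as a node whose only entry is the local copy: then \<open>\<Phi>\<close> is
  the cost of the entry list \<open>entries T\<^sub>1 @ [Sub T\<^sub>2]\<close> in both of its cases.\<close>

fun entries :: "ctree \<Rightarrow> centry list" where
  "entries (Triv r) = [LocalCopy]"
| "entries (Node r es) = es"

lemma costs_entries:
  assumes "is_ctree R r T"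
  shows "costs m \<alpha> \<beta> \<gamma> r 0 (entries T) = (if R = {r} then \<gamma> r * m r else cost m \<alpha> \<beta> \<gamma> T)"
  using assms is_ctree_singleton_iff[OF assms] by (cases T) (auto simp: is_ctree_def)

lemma costs_join:
  assumes "is_ctree R r T1" and "is_ctree Rb r' T2"
  shows "costs m \<alpha> \<beta> \<gamma> r 0 (entries T1 @ [Sub T2]) =
    (if R = {r} then max (\<gamma> r * m r) (cost m \<alpha> \<beta> \<gamma> T2)
     else max (cost m \<alpha> \<beta> \<gamma> T1) (cost m \<alpha> \<beta> \<gamma> T2))
    + \<alpha> r' r + \<beta> r' r * Size m Rb"
  using costs_entries[OF assms(1)] assms(2) by (simp add: costs_append is_ctree_def)

lemma is_ctree_attach:
  assumes T1: "is_ctree R r T1" and T2: "is_ctree Rb r' T2" and "R \<inter> Rb = {}"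
  shows "is_ctree (R \<union> Rb) r (Node r (entries T1 @ [Sub T2]))"
proof (cases T1)
  case (Triv x)
  then show ?thesis using assms by (auto simp: is_ctree_def)
next
  case (Node x es)
  then have "esets e \<subseteq> R" if "e \<in> set es" for e
    using T1 that by (auto simp: is_ctree_def)
  then show ?thesis
    using assms Node by (fastforce simp: is_ctree_def sorted_wrt_append)
qed

lemma LocalCopies_count_one:
  assumes "\<forall>e\<in>set es. e = LocalCopy" and "length (filter (\<lambda>e. e = LocalCopy) es) = 1"
  shows "es = [LocalCopy]"
proof -
  have "filter (\<lambda>e. e = LocalCopy) es = es" using assms(1) by (simp add: filter_id_conv)
  then show ?thesis using assms by (cases es) auto
qed

lemma split_last_Sub:
  assumes "Sub t \<in> set es"
  obtains pre s post where "es = pre @ Sub s # post" and "\<forall>e\<in>set post. e = LocalCopy"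
  using assms
proof (induction es arbitrary: thesis rule: rev_induct)
  case (snoc e es)
  show ?case
  proof (cases e)
    case LocalCopy
    then have "Sub t \<in> set es" using snoc.prems(2) by auto
    then obtain pre s post where "es = pre @ Sub s # post" "\<forall>e\<in>set post. e = LocalCopy"
      using snoc.IH by blast
    then show ?thesis using LocalCopy snoc.prems(1)[of pre s "post @ [e]"] by simp
  next
    case (Sub s)
    then show ?thesis using snoc.prems(1)[of es s "[]"] by simp
  qed
qed simp

lemma is_ctree_detach:
  assumes T: "is_ctree P r (Node r (pre @ Sub t # post))"
  obtains T1 where "is_ctree (P - tset t) r T1" and "entries T1 = pre @ post"
proof -
  let ?es = "pre @ post"
  have wf: "length (filter (\<lambda>e. e = LocalCopy) ?es) = 1" "\<forall>e\<in>set ?es. wf_entry e"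
    "\<forall>s. Sub s \<in> set ?es \<longrightarrow> r \<notin> tset s" "disjoint_entries ?es"
    and r_t: "r \<notin> tset t" and disj: "\<forall>e\<in>set ?es. esets e \<inter> tset t = {}"
    using T by (auto simp: is_ctree_def sorted_wrt_append Int_commute)
  have P_t: "P - tset t = tset (Node r ?es)"
    using T disj r_t by (auto simp: is_ctree_def)
  show ?thesis
  proof (cases "\<exists>s. Sub s \<in> set ?es")
    case True
    then have "is_ctree (P - tset t) r (Node r ?es)"
      using wf P_t by (simp add: is_ctree_def)
    then show ?thesis using that by simp
  next
    case False
    then have "\<forall>e\<in>set ?es. e = LocalCopy" by (metis centry.exhaust)
    then have "?es = [LocalCopy]" using wf(1) by (rule LocalCopies_count_one)
    then have "is_ctree (P - tset t) r (Triv r)" using P_t by (simp add: is_ctree_def)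
    then show ?thesis using that \<open>?es = [LocalCopy]\<close> by simp
  qed
qed

lemma join_last_subtree_le_cost:
  assumes T: "is_ctree P r T" and "P \<noteq> {r}" and "\<gamma> r * m r \<ge> 0"
  obtains R Rb r' T1 T2 where "R \<union> Rb = P" and "R \<inter> Rb = {}" and "r \<in> R" and "r' \<in> Rb"
    and "is_ctree R r T1" and "is_ctree Rb r' T2"
    and "costs m \<alpha> \<beta> \<gamma> r 0 (entries T1 @ [Sub T2]) \<le> cost m \<alpha> \<beta> \<gamma> T"
proof -
  obtain es where es: "T = Node r es"
    using T assms(2) is_ctree_singleton_iff[OF T] by (cases T) (auto simp: is_ctree_def)
  then obtain t where "Sub t \<in> set es" using T by (auto simp: is_ctree_def)
  then obtain pre s post where split: "es = pre @ Sub s # post"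
    and post: "\<forall>e\<in>set post. e = LocalCopy"
    by (rule split_last_Sub)
  then have T_split: "is_ctree P r (Node r (pre @ Sub s # post))" using T es by simp
  then obtain T1 where T1: "is_ctree (P - tset s) r T1" and "entries T1 = pre @ post"
    by (rule is_ctree_detach)
  then have "costs m \<alpha> \<beta> \<gamma> r 0 (entries T1 @ [Sub s]) \<le> cost m \<alpha> \<beta> \<gamma> T"
    using costs_move_Sub_to_end_le[where m = m and \<gamma> = \<gamma> and r = r, OF post assms(3)] es split by simp
  moreover have "wf_tree s" "tset s \<subseteq> P" "r \<notin> tset s"
    using T_split by (auto simp: is_ctree_def)
  moreover have "r \<in> P" using T troot_in_tset by (auto simp: is_ctree_def)
  ultimately show ?thesis
    using that[of "P - tset s" "tset s" "troot s" T1 s] T1 troot_in_tset[of s]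
    by (auto simp: is_ctree_def)
qed

lemma Min_eq_if_dominating_subset:
  fixes A B :: "'a::linorder set"
  assumes "finite A" and "A \<noteq> {}" and "B \<subseteq> A" and "\<forall>a\<in>A. \<exists>b\<in>B. b \<le> a"
  shows "Min A = Min B"
proof -
  obtain b where "b \<in> B" and "b \<le> Min A" using assms Min_in by blast
  moreover have "finite B" using assms(1,3) by (rule rev_finite_subset)
  ultimately have "Min B \<le> Min A" using Min_le order.trans by blast
  moreover have "Min A \<le> Min B" using Min_antimono \<open>b \<in> B\<close> assms by blast
  ultimately show ?thesis by simp
qed

theorem proposition2:
  fixes p :: nat and m :: "nat \<Rightarrow> real" and \<alpha> \<beta> :: "nat \<Rightarrow> nat \<Rightarrow> real"
    and \<gamma> :: "nat \<Rightarrow> real" and P :: "nat set" and r :: nat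
  assumes m_nn: "\<forall>i<p. m i \<ge> 0"
    and \<alpha>_nn: "\<forall>i<p. \<forall>j<p. i \<noteq> j \<longrightarrow> \<alpha> i j \<ge> 0"
    and \<beta>_nn: "\<forall>i<p. \<forall>j<p. i \<noteq> j \<longrightarrow> \<beta> i j \<ge> 0"
    and \<gamma>_nn: "\<forall>i<p. \<gamma> i \<ge> 0"
    and P_sub: "P \<subseteq> {..<p}"
    and P_card: "card P \<ge> 2"
    and r_in: "r \<in> P"
  shows "Min {cost m \<alpha> \<beta> \<gamma> T | T. is_ctree P r T} =
         Min {(if R = {r} then max (\<gamma> r * m r) (cost m \<alpha> \<beta> \<gamma> T2)
               else max (cost m \<alpha> \<beta> \<gamma> T1) (cost m \<alpha> \<beta> \<gamma> T2))
              + \<alpha> r' r + \<beta> r' r * Size m Rb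
            | R Rb r' T1 T2. R \<union> Rb = P \<and> R \<inter> Rb = {} \<and> r \<in> R \<and> r' \<in> Rb
                \<and> is_ctree R r T1 \<and> is_ctree Rb r' T2}"
    (is "Min ?trees = Min ?joins")
proof -
  have "finite P" using P_card card.infinite by force
  have "P \<noteq> {r}" using P_card by auto
  have copy_nonneg: "\<gamma> r * m r \<ge> 0" using r_in P_sub m_nn \<gamma>_nn by auto
  have "?joins \<subseteq> ?trees"
  proof
    fix x
    assume "x \<in> ?joins"
    then obtain R Rb r' T1 T2 where "R \<union> Rb = P" and disj: "R \<inter> Rb = {}"
      and T1: "is_ctree R r T1" and T2: "is_ctree Rb r' T2"
      and "x = costs m \<alpha> \<beta> \<gamma> r 0 (entries T1 @ [Sub T2])"
      by (auto simp only: costs_join)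
    then show "x \<in> ?trees" using is_ctree_attach[OF T1 T2 disj] by auto
  qed
  moreover have "\<exists>y\<in>?joins. y \<le> x" if tree: "x \<in> ?trees" for x
  proof -
    obtain T where T: "is_ctree P r T" and x: "x = cost m \<alpha> \<beta> \<gamma> T" using tree by blast
    obtain R Rb r' T1 T2 where parts: "R \<union> Rb = P" "R \<inter> Rb = {}" "r \<in> R" "r' \<in> Rb"
      and T1: "is_ctree R r T1" and T2: "is_ctree Rb r' T2"
      and le: "costs m \<alpha> \<beta> \<gamma> r 0 (entries T1 @ [Sub T2]) \<le> x"
      unfolding x
      by (rule join_last_subtree_le_cost[where m = m and \<gamma> = \<gamma>, OF T \<open>P \<noteq> {r}\<close> copy_nonneg])
    have "costs m \<alpha> \<beta> \<gamma> r 0 (entries T1 @ [Sub T2]) \<in> ?joins"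
      unfolding costs_join[OF T1 T2] using parts T1 T2 by blast
    then show ?thesis using le by blast
  qed
  moreover obtain T where "is_ctree P r T" using ctree_exists \<open>finite P\<close> r_in by blast
  ultimately show ?thesis
    using finite_ctrees[OF \<open>finite P\<close>, of r]
    by (intro Min_eq_if_dominating_subset) auto
qed

end
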